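(* Let $X\subseteq\mathbf{P}(\mathbf{w})$, $\mathbf{w}=(w_0,\dots,w_n)$, be a closed subscheme of dimension $d$ with Hilbert quasi-polynomial $HQ_X(t)=\sum_{i=0}^d c_i(t)t^i$. Let $m$ be a positive integer, let $\mathbf{w}'=(w_0,\dots,w_n,m)$, and let $X'\subseteq\mathbf{P}(\mathbf{w}')$ be the $m$-cone over $X$. Then \[ \deg(X')=\frac{d!}{q'}\sum_{\substack{0\le j<q\\ \gcd(m,q)\mid j}} c_d(j), \] where $q=\operatorname{lcm}(w_0,\dots,w_n)$ and $q'=\operatorname{lcm}(w_0,\dots,w_n,m)$.
   Context: $\Bbbk$ algebraically closed; $S(\mathbf{w})=\Bbbk[x_0,\dots,x_n]$ graded by $\deg x_i=w_i$, $\mathbf{P}(\mathbf{w})=\operatorname{Proj}S(\mathbf{w})$. For a closed subscheme $X$ of dimension $d$ with homogeneous ideal $I_X$, the Hilbert function $t\mapsto\dim_\Bbbk(S(\mathbf{w})/I_X)_t$ agrees for $t\gg0$ with a quasi-polynomial $HQ_X(t)=\sum_{i=0}^d c_i(t)t^i$ whose coefficients $c_i:\mathbb{Z}\to\Bbbk$ are periodic, $c_d\ne0$, with period dividing $\operatorname{lcm}(w_0,\dots,w_n)$. The degree of $X$ is $\deg X=d!\,c_d(0)$. If $\mathbf{w}'$ is obtained by appending $m$ to $\mathbf{w}$, the $m$-cone over $X$ is the subscheme of $\mathbf{P}(\mathbf{w}')$ defined by $I_X S(\mathbf{w}')$. *)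

theory Defs
  imports "HOL-Library.Poly_Mapping" "HOL-Computational_Algebra.Polynomial"
begin

(* Polynomials in variables x_0, x_1, ... over 'k: monomials are exponent vectors nat =>0 nat *)
type_synonym 'k mpoly = "(nat \<Rightarrow>\<^sub>0 nat) \<Rightarrow>\<^sub>0 'k"

definition pscale :: "'k::field \<Rightarrow> 'k mpoly \<Rightarrow> 'k mpoly" where
  "pscale c p = Poly_Mapping.map (\<lambda>x. c * x) p"

definition kdim :: "'k::field mpoly set \<Rightarrow> nat" where
  "kdim V = vector_space.dim pscale V"

definition wdeg :: "nat list \<Rightarrow> (nat \<Rightarrow>\<^sub>0 nat) \<Rightarrow> nat" where
  "wdeg w \<alpha> = (\<Sum>i<length w. w ! i * Poly_Mapping.lookup \<alpha> i)"

(* membership in S(w) = k[x_0,...,x_n], n+1 = length w *)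
definition in_ring :: "nat list \<Rightarrow> 'k::field mpoly \<Rightarrow> bool" where
  "in_ring w p \<longleftrightarrow> (\<forall>\<alpha>\<in>Poly_Mapping.keys p. \<forall>i. Poly_Mapping.lookup \<alpha> i \<noteq> 0 \<longrightarrow> i < length w)"

definition graded_piece :: "nat list \<Rightarrow> int \<Rightarrow> 'k::field mpoly set" where
  "graded_piece w t = {p. in_ring w p \<and> (\<forall>\<alpha>\<in>Poly_Mapping.keys p. int (wdeg w \<alpha>) = t)}"

definition homog_comp :: "nat list \<Rightarrow> int \<Rightarrow> 'k::field mpoly \<Rightarrow> 'k mpoly" where
  "homog_comp w t p = Abs_poly_mapping (\<lambda>\<alpha>. if int (wdeg w \<alpha>) = t then Poly_Mapping.lookup p \<alpha> else 0)"

definition ideal_in :: "nat list \<Rightarrow> 'k::field mpoly set \<Rightarrow> bool" where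
  "ideal_in w I \<longleftrightarrow> I \<subseteq> {p. in_ring w p} \<and> 0 \<in> I \<and>
     (\<forall>p\<in>I. \<forall>q\<in>I. p + q \<in> I) \<and> (\<forall>p\<in>I. \<forall>q. in_ring w q \<longrightarrow> q * p \<in> I)"

definition homog_ideal :: "nat list \<Rightarrow> 'k::field mpoly set \<Rightarrow> bool" where
  "homog_ideal w I \<longleftrightarrow> ideal_in w I \<and> (\<forall>p\<in>I. \<forall>t. homog_comp w t p \<in> I)"

definition monom :: "(nat \<Rightarrow>\<^sub>0 nat) \<Rightarrow> 'k::field mpoly" where
  "monom \<alpha> = Poly_Mapping.single \<alpha> 1"

(* I is saturated w.r.t. the irrelevant ideal m = (x_0,...,x_n):
   if m^N f \<subseteq> I for some N (m^N is generated by the monomials of total degree N) then f \<in> I *)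
definition saturated :: "nat list \<Rightarrow> 'k::field mpoly set \<Rightarrow> bool" where
  "saturated w I \<longleftrightarrow> (\<forall>f. in_ring w f \<longrightarrow>
     (\<exists>N. \<forall>\<alpha>. (\<forall>i. Poly_Mapping.lookup \<alpha> i \<noteq> 0 \<longrightarrow> i < length w) \<and> (\<Sum>i<length w. Poly_Mapping.lookup \<alpha> i) = N
            \<longrightarrow> monom \<alpha> * f \<in> I) \<longrightarrow> f \<in> I)"

definition ext_ideal :: "nat list \<Rightarrow> 'k::field mpoly set \<Rightarrow> 'k mpoly set" where
  "ext_ideal w' I = \<Inter>{J. ideal_in w' J \<and> I \<subseteq> J}"

(* Hilbert function t \<mapsto> dim_k (S(w)/I)_t = dim S(w)_t - dim (I \<inter> S(w)_t) *)
definition hilb :: "nat list \<Rightarrow> 'k::field mpoly set \<Rightarrow> int \<Rightarrow> nat" where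
  "hilb w I t = kdim (graded_piece w t :: 'k mpoly set) - kdim (I \<inter> graded_piece w t)"

definition hilb_qpoly :: "nat list \<Rightarrow> 'k::field mpoly set \<Rightarrow> nat \<Rightarrow> (nat \<Rightarrow> int \<Rightarrow> rat) \<Rightarrow> bool" where
  "hilb_qpoly w I d c \<longleftrightarrow>
     (\<forall>i\<le>d. \<forall>t. c i (t + int (Lcm (set w))) = c i t) \<and>
     c d \<noteq> (\<lambda>_. 0) \<and>
     (\<exists>t0. \<forall>t\<ge>t0. rat_of_nat (hilb w I t) = (\<Sum>i\<le>d. c i t * rat_of_int t ^ i))"

end

theory Submission
  imports Defs
begin

(* Write S(w') = S(w)[y] with deg y = m. Every graded piece of S(w') splits as
   S(w)_t + y S(w')_(t-m), and since I lives in S(w) the extended ideal J = I S(w') splits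
   the same way: J_t = I_t + y J_(t-m). Hence the Hilbert functions satisfy
   H'(t) = H(t) + H'(t - m), and iterating over one period q' = lcm(q, m),
   H'(t) - H'(t - q') = sum_(a < q'/m) H(t - a m).
   On a residue class r mod q' the right-hand side is eventually a polynomial in t of degree d
   with leading coefficient sum_a c_d(r - a m), so H' is there a polynomial of degree d + 1 with
   leading coefficient sum_a c_d(r - a m) / (q' (d + 1)). Because H >= 0, c_d >= 0, so these
   coefficients do not all vanish, and H' is a quasi-polynomial of degree d + 1. At r = 0 the
   residues -a m mod q (a < q'/m) are exactly the multiples of gcd(m, q) below q. *)

section \<open>Polynomials as a vector space\<close>

(* Poly_Mapping hides these names behind its qualifier. *)
abbreviation lookup :: "('a \<Rightarrow>\<^sub>0 'b::zero) \<Rightarrow> 'a \<Rightarrow> 'b" where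
  "lookup \<equiv> Poly_Mapping.lookup"

abbreviation keys :: "('a \<Rightarrow>\<^sub>0 'b::zero) \<Rightarrow> 'a set" where
  "keys \<equiv> Poly_Mapping.keys"

lemma pscale_eq_mult: "pscale c p = Poly_Mapping.single 0 c * p"
  by (simp add: pscale_def mult_map_scale_conv_mult)

interpretation mpoly: vector_space "pscale :: 'k::field \<Rightarrow> 'k mpoly \<Rightarrow> 'k mpoly"
  by unfold_locales
    (simp_all add: pscale_eq_mult algebra_simps single_add mult_single flip: mult.assoc)

lemma kdim_eq_dim: "kdim V = mpoly.dim V"
  by (simp add: kdim_def)

context vector_space
begin

lemma finite_basis_of_finite_span:
  assumes "finite W" "V \<subseteq> span W"
  obtains B where "B \<subseteq> V" "independent B" "V \<subseteq> span B" "card B = dim V" "finite B"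
proof -
  obtain B where B: "B \<subseteq> V" "independent B" "V \<subseteq> span B" "card B = dim V"
    by (rule basis_exists)
  moreover have "finite B"
    using independent_span_bound[OF assms(1) B(2)] B(1) assms(2) by auto
  ultimately show ?thesis using that by blast
qed

lemma dim_mono_finite_span:
  assumes "finite W" "V \<subseteq> span W" "U \<subseteq> V"
  shows "dim U \<le> dim V"
proof -
  obtain B where "V \<subseteq> span B" "card B = dim V" "finite B"
    using finite_basis_of_finite_span[OF assms(1,2)] by metis
  then show ?thesis using dim_le_card[of U B] assms(3) by simp
qed

lemma dim_sum_of_disjoint_subspaces:
  assumes "subspace A" "subspace B" "A \<inter> B \<subseteq> {0}"
    and "finite W" "A \<subseteq> span W" "B \<subseteq> span W"
  shows "dim {a + b | a b. a \<in> A \<and> b \<in> B} = dim A + dim B"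
proof -
  obtain BA where BA: "BA \<subseteq> A" "independent BA" "A \<subseteq> span BA" "card BA = dim A" "finite BA"
    using finite_basis_of_finite_span[OF assms(4,5)] .
  obtain BB where BB: "BB \<subseteq> B" "independent BB" "B \<subseteq> span BB" "card BB = dim B" "finite BB"
    using finite_basis_of_finite_span[OF assms(4,6)] .
  have "0 \<notin> BA" using BA(2) dependent_zero by blast
  then have disjoint: "BA \<inter> BB = {}" using BA(1) BB(1) assms(3) by blast
  have "independent (BA \<union> BB)"
  proof (rule independent_if_scalars_zero)
    fix u x assume sum0: "(\<Sum>x\<in>BA \<union> BB. u x *s x) = 0" and "x \<in> BA \<union> BB"
    define a where "a = (\<Sum>x\<in>BA. u x *s x)"
    define b where "b = (\<Sum>x\<in>BB. u x *s x)"
    have "a \<in> A" "b \<in> B"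
      unfolding a_def b_def using BA(1) BB(1) assms(1,2)
      by (auto intro!: subspace_sum subspace_scale)
    moreover have "a = - b"
      using sum0 by (simp add: a_def b_def sum.union_disjoint[OF BA(5) BB(5) disjoint] eq_neg_iff_add_eq_0)
    ultimately have "a = 0" "b = 0" using assms(2,3) subspace_neg by fastforce+
    then show "u x = 0"
      using \<open>x \<in> BA \<union> BB\<close> independentD[OF BA(2) BA(5) order.refl] independentD[OF BB(2) BB(5) order.refl]
      by (auto simp: a_def b_def)
  qed (use BA(5) BB(5) in simp)
  moreover have "BA \<union> BB \<subseteq> {a + b | a b. a \<in> A \<and> b \<in> B}"
    using BA(1) BB(1) subspace_0[OF assms(1)] subspace_0[OF assms(2)] by force
  moreover have "{a + b | a b. a \<in> A \<and> b \<in> B} \<subseteq> span (BA \<union> BB)"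
    using BA(3) BB(3) by (auto simp: span_Un)
  ultimately have "card (BA \<union> BB) = dim {a + b | a b. a \<in> A \<and> b \<in> B}"
    by (intro basis_card_eq_dim)
  then show ?thesis using card_Un_disjoint[OF BA(5) BB(5) disjoint] BA(4) BB(4) by simp
qed

lemma dim_image_injective_linear:
  assumes "Vector_Spaces.linear scale scale f" "inj f" "finite W" "V \<subseteq> span W"
  shows "dim (f ` V) = dim V"
proof -
  interpret f: Vector_Spaces.linear scale scale f by (rule assms(1))
  obtain B where B: "B \<subseteq> V" "independent B" "V \<subseteq> span B" "card B = dim V" "finite B"
    using finite_basis_of_finite_span[OF assms(3,4)] .
  have "card (f ` B) = dim (f ` V)"
  proof (rule basis_card_eq_dim)
    show "f ` B \<subseteq> f ` V" using B(1) by blast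
    show "f ` V \<subseteq> span (f ` B)" using B(3) f.span_image by blast
    show "independent (f ` B)"
      using f.independent_injective_image[OF B(2)] assms(2) by (simp add: inj_on_def)
  qed
  then show ?thesis using B(4) assms(2) by (simp add: card_image inj_on_def)
qed

end

section \<open>Splitting off a variable\<close>

abbreviation var_exp :: "nat \<Rightarrow> nat \<Rightarrow>\<^sub>0 nat" where
  "var_exp n \<equiv> Poly_Mapping.single n (Suc 0)"

abbreviation var :: "nat \<Rightarrow> 'k::field mpoly" where
  "var n \<equiv> monom (var_exp n)"

definition free_of :: "nat \<Rightarrow> 'k::field mpoly \<Rightarrow> bool" where
  "free_of n p \<longleftrightarrow> (\<forall>\<alpha>\<in>keys p. lookup \<alpha> n = 0)"

definition free_part :: "nat \<Rightarrow> 'k::field mpoly \<Rightarrow> 'k mpoly" where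
  "free_part n p = Abs_poly_mapping (\<lambda>\<alpha>. if lookup \<alpha> n = 0 then lookup p \<alpha> else 0)"

definition var_quot :: "nat \<Rightarrow> 'k::field mpoly \<Rightarrow> 'k mpoly" where
  "var_quot n p = Abs_poly_mapping (\<lambda>\<alpha>. lookup p (\<alpha> + var_exp n))"

lemma var_exp_cancel: "lookup \<alpha> n \<noteq> 0 \<Longrightarrow> \<alpha> - var_exp n + var_exp n = \<alpha>"
  by (intro poly_mapping_eqI) (auto simp: lookup_add lookup_minus lookup_single when_def)

lemma lookup_var_mult:
  fixes q :: "'k::field mpoly"
  shows "lookup (var n * q) \<alpha> = (if lookup \<alpha> n = 0 then 0 else lookup q (\<alpha> - var_exp n))"
proof -
  have "lookup (var n * q) \<alpha> = Sum_any (\<lambda>\<beta>. lookup q \<beta> when \<alpha> = var_exp n + \<beta>)"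
    by (simp add: monom_def lookup_mult lookup_single when_mult)
  also have "\<dots> = (if lookup \<alpha> n = 0 then 0 else lookup q (\<alpha> - var_exp n))"
  proof (cases "lookup \<alpha> n = 0")
    case True
    then have "\<alpha> \<noteq> var_exp n + \<beta>" for \<beta>
      by (metis add_is_0 lookup_add lookup_single_eq nat.distinct(1))
    with True show ?thesis by (simp add: when_def)
  next
    case False
    then have "\<alpha> = var_exp n + \<beta> \<longleftrightarrow> \<beta> = \<alpha> - var_exp n" for \<beta>
      using var_exp_cancel[of \<alpha> n] by (auto simp: add.commute)
    with False show ?thesis by simp
  qed
  finally show ?thesis .
qed

lemma lookup_free_part: "lookup (free_part n p) \<alpha> = (if lookup \<alpha> n = 0 then lookup p \<alpha> else 0)"
proof -
  have "finite {\<alpha>. (if lookup \<alpha> n = 0 then lookup p \<alpha> else 0) \<noteq> 0}"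
    by (rule finite_subset[of _ "keys p"]) (auto simp: in_keys_iff)
  then show ?thesis by (simp add: free_part_def)
qed

lemma lookup_var_quot: "lookup (var_quot n p) \<alpha> = lookup p (\<alpha> + var_exp n)"
proof -
  have "{\<alpha>. lookup p (\<alpha> + var_exp n) \<noteq> 0} = (\<lambda>\<alpha>. \<alpha> + var_exp n) -` keys p"
    by (auto simp: in_keys_iff)
  moreover have "finite ((\<lambda>\<alpha>. \<alpha> + var_exp n) -` keys p)"
    by (rule finite_vimageI) (auto simp: inj_def)
  ultimately show ?thesis by (simp add: var_quot_def)
qed

lemma keys_free_part: "\<alpha> \<in> keys (free_part n p) \<longleftrightarrow> lookup \<alpha> n = 0 \<and> \<alpha> \<in> keys p"
  by (simp add: in_keys_iff lookup_free_part)

lemma keys_var_quot: "\<alpha> \<in> keys (var_quot n p) \<longleftrightarrow> \<alpha> + var_exp n \<in> keys p"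
  by (simp add: in_keys_iff lookup_var_quot)

lemma keys_var_mult: "\<alpha> \<in> keys (var n * q) \<longleftrightarrow> lookup \<alpha> n \<noteq> 0 \<and> \<alpha> - var_exp n \<in> keys q"
  by (simp add: in_keys_iff lookup_var_mult)

lemma free_part_plus_var_quot: "p = free_part n p + var n * var_quot n p"
  by (intro poly_mapping_eqI)
    (auto simp: lookup_add lookup_var_mult lookup_free_part lookup_var_quot var_exp_cancel)

lemma free_part_add: "free_part n (p + q) = free_part n p + free_part n q"
  by (intro poly_mapping_eqI) (auto simp: lookup_add lookup_free_part)

lemma var_quot_add: "var_quot n (p + q) = var_quot n p + var_quot n q"
  by (intro poly_mapping_eqI) (auto simp: lookup_add lookup_var_quot)

lemma free_part_0 [simp]: "free_part n 0 = 0"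
  and var_quot_0 [simp]: "var_quot n 0 = 0"
  by (intro poly_mapping_eqI; simp add: lookup_free_part lookup_var_quot)+

lemma free_part_var_mult [simp]: "free_part n (var n * q) = 0"
  by (intro poly_mapping_eqI) (auto simp: lookup_var_mult lookup_free_part)

lemma var_quot_var_mult [simp]: "var_quot n (var n * q) = q"
  by (intro poly_mapping_eqI) (auto simp: lookup_var_mult lookup_var_quot lookup_add)

lemma free_of_free_part: "free_of n (free_part n p)"
  by (simp add: free_of_def keys_free_part)

lemma free_of_mult: "free_of n a \<Longrightarrow> free_of n b \<Longrightarrow> free_of n (a * b)"
  unfolding free_of_def using keys_mult[of a b] by (force simp: lookup_add)

lemma free_part_free_of: "free_of n p \<Longrightarrow> free_part n p = p"
  by (intro poly_mapping_eqI) (metis free_of_def in_keys_iff lookup_free_part)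

lemma var_quot_free_of:
  assumes "free_of n p"
  shows "var_quot n p = 0"
proof (intro poly_mapping_eqI)
  fix \<alpha>
  have "lookup (\<alpha> + var_exp n) n \<noteq> 0" by (simp add: lookup_add)
  then have "\<alpha> + var_exp n \<notin> keys p" using assms by (auto simp: free_of_def)
  then show "lookup (var_quot n p) \<alpha> = lookup 0 \<alpha>" by (simp add: lookup_var_quot in_keys_iff)
qed

lemma free_of_var_mult_eq_0: "free_of n (var n * q) \<Longrightarrow> var n * q = 0"
  by (metis free_part_free_of free_part_var_mult)

lemma
  assumes "free_of n p"
  shows free_part_mult_free_of: "free_part n (q * p) = free_part n q * p"
    and var_quot_mult_free_of: "var_quot n (q * p) = var_quot n q * p"
proof -
  have qp: "q * p = free_part n q * p + var n * (var_quot n q * p)"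
    by (subst free_part_plus_var_quot[of q n]) (simp add: algebra_simps)
  have "free_of n (free_part n q * p)" using assms by (simp add: free_of_mult free_of_free_part)
  then show "free_part n (q * p) = free_part n q * p"
    "var_quot n (q * p) = var_quot n q * p"
    by (subst qp; simp add: free_part_add var_quot_add free_part_free_of var_quot_free_of)+
qed

lemma in_ringD: "in_ring w p \<Longrightarrow> \<alpha> \<in> keys p \<Longrightarrow> lookup \<alpha> i \<noteq> 0 \<Longrightarrow> i < length w"
  by (simp add: in_ring_def)

lemma in_ring_mono: "in_ring w p \<Longrightarrow> length w \<le> length w' \<Longrightarrow> in_ring w' p"
  unfolding in_ring_def by (meson order.strict_trans2)

lemma in_ring_add: "in_ring w p \<Longrightarrow> in_ring w q \<Longrightarrow> in_ring w (p + q)"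
  using keys_add[of p q] by (auto simp: in_ring_def)

lemma in_ring_mult: "in_ring w p \<Longrightarrow> in_ring w q \<Longrightarrow> in_ring w (p * q)"
  using keys_mult[of p q] by (fastforce simp: in_ring_def lookup_add)

lemma in_ring_0 [simp]: "in_ring w 0"
  and in_ring_1 [simp]: "in_ring w 1"
  by (simp_all add: in_ring_def)

lemma in_ring_single_0: "in_ring w (Poly_Mapping.single 0 c)"
  by (simp add: in_ring_def)

lemma in_ring_var: "in_ring (w @ [m]) (var (length w))"
  by (simp add: in_ring_def monom_def lookup_single when_def)

lemma free_of_in_ring: "in_ring w p \<Longrightarrow> free_of (length w) p"
  by (auto simp: in_ring_def free_of_def)

lemma in_ring_free_part:
  assumes "in_ring (w @ [m]) p"
  shows "in_ring w (free_part (length w) p)"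
proof (unfold in_ring_def, intro ballI allI impI)
  fix \<alpha> i assume "\<alpha> \<in> keys (free_part (length w) p)" "lookup \<alpha> i \<noteq> 0"
  then have "lookup \<alpha> (length w) = 0" "\<alpha> \<in> keys p" by (simp_all add: keys_free_part)
  then show "i < length w"
    using in_ringD[OF assms \<open>\<alpha> \<in> keys p\<close> \<open>lookup \<alpha> i \<noteq> 0\<close>] \<open>lookup \<alpha> i \<noteq> 0\<close>
    by (auto simp: less_Suc_eq)
qed

lemma in_ring_var_quot: "in_ring w p \<Longrightarrow> in_ring w (var_quot n p)"
  by (fastforce simp: in_ring_def keys_var_quot lookup_add)

definition monoms :: "nat list \<Rightarrow> int \<Rightarrow> (nat \<Rightarrow>\<^sub>0 nat) set" where
  "monoms w t = {\<alpha>. (\<forall>i. lookup \<alpha> i \<noteq> 0 \<longrightarrow> i < length w) \<and> int (wdeg w \<alpha>) = t}"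

lemma graded_piece_eq: "graded_piece w t = {p. keys p \<subseteq> monoms w t}"
  by (auto simp: graded_piece_def in_ring_def monoms_def)

lemma wdeg_append: "wdeg (w @ [m]) \<alpha> = wdeg w \<alpha> + m * lookup \<alpha> (length w)"
  by (simp add: wdeg_def nth_append)

lemma wdeg_add: "wdeg w (\<alpha> + \<beta>) = wdeg w \<alpha> + wdeg w \<beta>"
  by (simp add: wdeg_def lookup_add algebra_simps sum.distrib)

lemma wdeg_var_exp: "wdeg (w @ [m]) (var_exp (length w)) = m"
  by (simp add: wdeg_append) (simp add: wdeg_def lookup_single)

lemma lookup_le_wdeg:
  assumes "\<forall>x\<in>set w. 0 < x" "i < length w"
  shows "lookup \<alpha> i \<le> wdeg w \<alpha>"
proof -
  have "lookup \<alpha> i \<le> w ! i * lookup \<alpha> i" using assms nth_mem by fastforce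
  also have "\<dots> \<le> wdeg w \<alpha>"
    unfolding wdeg_def by (rule member_le_sum[where f = "\<lambda>j. w ! j * lookup \<alpha> j"]) (use assms in auto)
  finally show ?thesis .
qed

lemma finite_monoms:
  assumes "\<forall>x\<in>set w. 0 < x"
  shows "finite (monoms w t)"
proof -
  let ?F = "{f. \<forall>i. (i \<in> {..<length w} \<longrightarrow> f i \<in> {..nat t}) \<and> (i \<notin> {..<length w} \<longrightarrow> f i = 0)}"
  have "lookup \<alpha> \<in> ?F" if "\<alpha> \<in> monoms w t" for \<alpha>
  proof -
    from that have vars: "\<forall>i. lookup \<alpha> i \<noteq> 0 \<longrightarrow> i < length w" and "int (wdeg w \<alpha>) = t"
      by (simp_all add: monoms_def)
    then have "lookup \<alpha> i \<in> {..nat t}" if "i \<in> {..<length w}" for i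
      using lookup_le_wdeg[OF assms, of i \<alpha>] that by simp
    moreover have "lookup \<alpha> i = 0" if "i \<notin> {..<length w}" for i
      using vars that by (meson lessThan_iff)
    ultimately show ?thesis by (intro CollectI allI conjI impI)
  qed
  then have "lookup ` monoms w t \<subseteq> ?F" by (rule image_subsetI)
  then have "finite (lookup ` monoms w t)"
    by (rule finite_subset) (rule finite_set_of_finite_funs; simp)
  then show ?thesis by (rule finite_imageD) (intro inj_onI; simp)
qed

lemma keys_pscale: "keys (pscale c p) \<subseteq> keys p"
  by (auto simp: in_keys_iff pscale_def map.rep_eq when_def)

lemma subspace_graded_piece: "mpoly.subspace (graded_piece w t)"
proof -
  have "keys (p + q) \<subseteq> monoms w t" if "keys p \<subseteq> monoms w t" "keys q \<subseteq> monoms w t" for p q :: "'a mpoly"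
    using keys_add[of p q] that by blast
  moreover have "keys (pscale c p) \<subseteq> monoms w t" if "keys p \<subseteq> monoms w t" for c and p :: "'a mpoly"
    using keys_pscale[of c p] that by blast
  ultimately show ?thesis by (simp add: mpoly.subspace_def graded_piece_eq)
qed

lemma graded_piece_finite_span:
  assumes "\<forall>x\<in>set w. 0 < x"
  shows "graded_piece w t \<subseteq> mpoly.span (monom ` monoms w t)"
proof
  fix p :: "'k::field mpoly" assume p: "p \<in> graded_piece w t"
  have "p = (\<Sum>\<alpha>\<in>keys p. pscale (lookup p \<alpha>) (monom \<alpha>))"
    by (intro poly_mapping_eqI)
      (simp add: lookup_sum pscale_def map.rep_eq monom_def lookup_single when_def in_keys_iff
        if_distrib cong: if_cong)
  also have "\<dots> \<in> mpoly.span (monom ` monoms w t)"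
    using p by (intro mpoly.span_sum mpoly.span_scale mpoly.span_base) (auto simp: graded_piece_eq)
  finally show "p \<in> mpoly.span (monom ` monoms w t)" .
qed

lemma free_part_graded_piece:
  assumes "p \<in> graded_piece (w @ [m]) t"
  shows "free_part (length w) p \<in> graded_piece w t"
proof -
  have "\<alpha> \<in> monoms w t" if "\<alpha> \<in> monoms (w @ [m]) t" "lookup \<alpha> (length w) = 0" for \<alpha>
  proof -
    have "\<forall>i. lookup \<alpha> i \<noteq> 0 \<longrightarrow> i < Suc (length w)"
      using that(1) by (simp add: monoms_def)
    then have "i < length w" if "lookup \<alpha> i \<noteq> 0" for i
      using that \<open>lookup \<alpha> (length w) = 0\<close> by (metis less_SucE)
    then show ?thesis using that by (simp add: monoms_def wdeg_append)
  qed
  with assms show ?thesis by (auto simp: graded_piece_eq keys_free_part)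
qed

lemma var_quot_graded_piece:
  assumes "p \<in> graded_piece (w @ [m]) t"
  shows "var_quot (length w) p \<in> graded_piece (w @ [m]) (t - int m)"
proof -
  have "\<alpha> \<in> monoms (w @ [m]) (t - int m)" if "\<alpha> + var_exp (length w) \<in> monoms (w @ [m]) t" for \<alpha>
    using that by (auto simp: monoms_def wdeg_add wdeg_var_exp lookup_add)
  with assms show ?thesis by (auto simp: graded_piece_eq keys_var_quot)
qed

lemma monoms_subset_append: "monoms w t \<subseteq> monoms (w @ [m]) t"
proof
  fix \<alpha> assume "\<alpha> \<in> monoms w t"
  then have "lookup \<alpha> (length w) = 0" by (auto simp: monoms_def)
  with \<open>\<alpha> \<in> monoms w t\<close> show "\<alpha> \<in> monoms (w @ [m]) t"
    by (auto simp: monoms_def wdeg_append intro: less_SucI)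
qed

lemma graded_piece_subset_append: "graded_piece w t \<subseteq> graded_piece (w @ [m]) t"
  using monoms_subset_append by (fastforce simp: graded_piece_eq)

lemma var_mult_graded_piece:
  assumes "q \<in> graded_piece (w @ [m]) (t - int m)"
  shows "var (length w) * q \<in> graded_piece (w @ [m]) t"
proof -
  have "\<alpha> \<in> monoms (w @ [m]) t"
    if "lookup \<alpha> (length w) \<noteq> 0" "\<alpha> - var_exp (length w) \<in> monoms (w @ [m]) (t - int m)" for \<alpha>
  proof -
    define \<beta> where "\<beta> = \<alpha> - var_exp (length w)"
    have \<alpha>: "\<alpha> = \<beta> + var_exp (length w)" using var_exp_cancel that(1) by (metis \<beta>_def)
    from that(2) have \<beta>: "\<forall>i. lookup \<beta> i \<noteq> 0 \<longrightarrow> i < Suc (length w)"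
      "int (wdeg (w @ [m]) \<beta>) = t - int m"
      by (simp_all add: monoms_def \<beta>_def)
    have "int (wdeg (w @ [m]) \<alpha>) = t" using \<beta>(2) by (simp add: \<alpha> wdeg_add wdeg_var_exp)
    moreover have "i < Suc (length w)" if "lookup \<alpha> i \<noteq> 0" for i
      using \<beta>(1) that by (cases "i = length w") (auto simp: \<alpha> lookup_add lookup_single)
    ultimately show ?thesis by (simp add: monoms_def)
  qed
  with assms show ?thesis by (auto simp: graded_piece_eq keys_var_mult)
qed

section \<open>The Hilbert function of a cone\<close>

(* ext_ideal is an intersection; this inductive description allows induction over its elements. *)
inductive_set ideal_span :: "nat list \<Rightarrow> 'k::field mpoly set \<Rightarrow> 'k mpoly set" for w I where
  zero: "0 \<in> ideal_span w I"
| mult: "p \<in> I \<Longrightarrow> in_ring w q \<Longrightarrow> q * p \<in> ideal_span w I"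
| add: "a \<in> ideal_span w I \<Longrightarrow> b \<in> ideal_span w I \<Longrightarrow> a + b \<in> ideal_span w I"

lemma ideal_span_in_ring:
  assumes "I \<subseteq> {p. in_ring w p}" and "a \<in> ideal_span w I"
  shows "in_ring w a"
  using assms(2) by induction (use assms(1) in \<open>auto intro: in_ring_mult in_ring_add\<close>)

lemma ideal_span_mult:
  assumes "in_ring w r" and "a \<in> ideal_span w I"
  shows "r * a \<in> ideal_span w I"
  using assms(2)
proof induction
  case (mult p q)
  then show ?case using ideal_span.mult[of p I w "r * q"] assms(1) by (simp add: in_ring_mult mult.assoc)
qed (auto simp: distrib_left intro: ideal_span.intros)

lemma subset_ideal_span: "I \<subseteq> ideal_span w I"
  using ideal_span.mult[of _ I w 1] by auto

lemma ideal_in_ideal_span: "I \<subseteq> {p. in_ring w p} \<Longrightarrow> ideal_in w (ideal_span w I)"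
  using ideal_span_in_ring ideal_span_mult by (auto simp: ideal_in_def intro: ideal_span.intros)

lemma ext_ideal_eq_ideal_span:
  assumes "I \<subseteq> {p. in_ring w p}"
  shows "ext_ideal w I = ideal_span w I"
proof
  show "ext_ideal w I \<subseteq> ideal_span w I"
    unfolding ext_ideal_def using ideal_in_ideal_span[OF assms] subset_ideal_span by blast
  have "a \<in> J" if "ideal_in w J" "I \<subseteq> J" "a \<in> ideal_span w I" for a J
    using that(3) by induction (use that(1,2) in \<open>auto simp: ideal_in_def\<close>)
  then show "ideal_span w I \<subseteq> ext_ideal w I"
    unfolding ext_ideal_def by blast
qed

lemma ideal_span_append_split:
  assumes "ideal_in w I" and "a \<in> ideal_span (w @ [m]) I"
  shows "free_part (length w) a \<in> I \<and> var_quot (length w) a \<in> ideal_span (w @ [m]) I"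
  using assms(2)
proof induction
  case (mult p q)
  have "in_ring w p" using mult.hyps(1) assms(1) by (auto simp: ideal_in_def)
  then have "free_of (length w) p" by (rule free_of_in_ring)
  then show ?case
    using mult assms(1) in_ring_free_part[OF mult.hyps(2)] in_ring_var_quot[OF mult.hyps(2)]
    by (auto simp: free_part_mult_free_of var_quot_mult_free_of ideal_in_def intro: ideal_span.mult)
qed (use assms(1) in \<open>auto simp: ideal_in_def free_part_add var_quot_add intro: ideal_span.intros\<close>)

lemma subspace_ideal_in: "ideal_in w I \<Longrightarrow> mpoly.subspace I"
  by (auto simp: mpoly.subspace_def ideal_in_def pscale_eq_mult in_ring_single_0)

lemma graded_piece_append_split:
  "graded_piece (w @ [m]) t =
     {a + var (length w) * b | a b. a \<in> graded_piece w t \<and> b \<in> graded_piece (w @ [m]) (t - int m)}"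
proof (intro equalityI subsetI)
  fix p assume "p \<in> graded_piece (w @ [m]) t"
  then show "p \<in> {a + var (length w) * b | a b. a \<in> graded_piece w t \<and> b \<in> graded_piece (w @ [m]) (t - int m)}"
    using free_part_plus_var_quot[of p "length w"] free_part_graded_piece var_quot_graded_piece by blast
next
  fix p assume "p \<in> {a + var (length w) * b | a b. a \<in> graded_piece w t \<and> b \<in> graded_piece (w @ [m]) (t - int m)}"
  then show "p \<in> graded_piece (w @ [m]) t"
    using graded_piece_subset_append var_mult_graded_piece subspace_graded_piece[THEN mpoly.subspace_add]
    by blast
qed

lemma ideal_span_graded_piece_split:
  fixes w :: "nat list" and m :: nat and I :: "'k::field mpoly set"
  assumes "ideal_in w I"
  defines "J \<equiv> ideal_span (w @ [m]) I"
  shows "J \<inter> graded_piece (w @ [m]) t =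
     {a + var (length w) * b | a b. a \<in> I \<inter> graded_piece w t \<and> b \<in> J \<inter> graded_piece (w @ [m]) (t - int m)}"
proof (intro equalityI subsetI)
  fix p assume "p \<in> J \<inter> graded_piece (w @ [m]) t"
  then show "p \<in> {a + var (length w) * b | a b. a \<in> I \<inter> graded_piece w t \<and> b \<in> J \<inter> graded_piece (w @ [m]) (t - int m)}"
    using free_part_plus_var_quot[of p "length w"] free_part_graded_piece var_quot_graded_piece
      ideal_span_append_split[OF assms(1)] unfolding J_def by blast
next
  have "J \<subseteq> {p. in_ring (w @ [m]) p}"
    using assms(1) ideal_span_in_ring[of I "w @ [m]"] in_ring_mono[of w _ "w @ [m]"]
    by (auto simp: J_def ideal_in_def)
  moreover have "I \<subseteq> J" by (simp add: J_def subset_ideal_span)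
  ultimately have "a + var (length w) * b \<in> J" if "a \<in> I" "b \<in> J" for a b
    using that ideal_span_mult[OF in_ring_var] ideal_span.add unfolding J_def by blast
  moreover fix p
  assume "p \<in> {a + var (length w) * b | a b. a \<in> I \<inter> graded_piece w t \<and> b \<in> J \<inter> graded_piece (w @ [m]) (t - int m)}"
  ultimately show "p \<in> J \<inter> graded_piece (w @ [m]) t"
    using graded_piece_append_split by blast
qed

lemma dim_var_mult_split:
  fixes A B :: "'k::field mpoly set"
  assumes "\<forall>x\<in>set w. 0 < x" "0 < m"
    and "mpoly.subspace A" "A \<subseteq> graded_piece w t"
    and "mpoly.subspace B" "B \<subseteq> graded_piece (w @ [m]) (t - int m)"
  shows "mpoly.dim {a + var (length w) * b | a b. a \<in> A \<and> b \<in> B} = mpoly.dim A + mpoly.dim B"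
proof -
  define f :: "'k mpoly \<Rightarrow> 'k mpoly" where "f b = var (length w) * b" for b
  interpret f: Vector_Spaces.linear pscale pscale f
    by unfold_locales (simp_all add: f_def pscale_eq_mult algebra_simps)
  have "inj f" by (rule injI) (metis f_def var_quot_var_mult)
  moreover have pos: "\<forall>x\<in>set (w @ [m]). 0 < x" using assms(1,2) by auto
  ultimately have "mpoly.dim (f ` B) = mpoly.dim B"
    using f.linear_axioms assms(6) graded_piece_finite_span[OF pos] finite_monoms[OF pos]
    by (intro mpoly.dim_image_injective_linear[where W = "monom ` monoms (w @ [m]) (t - int m)"]) auto
  have "A \<inter> f ` B \<subseteq> {0}"
  proof
    fix p assume "p \<in> A \<inter> f ` B"
    then have "free_of (length w) p" "p \<in> range f"
      using assms(4) free_of_in_ring by (auto simp: graded_piece_def)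
    then show "p \<in> {0}" by (metis f_def free_of_var_mult_eq_0 rangeE singletonI)
  qed
  moreover have "mpoly.subspace (f ` B)"
    using assms(5) by (rule f.subspace_image)
  moreover have "A \<union> f ` B \<subseteq> mpoly.span (monom ` monoms (w @ [m]) t)"
    using assms(4,6) graded_piece_subset_append var_mult_graded_piece graded_piece_finite_span[OF pos]
    by (fastforce simp: f_def)
  ultimately have "mpoly.dim {a + b | a b. a \<in> A \<and> b \<in> f ` B} = mpoly.dim A + mpoly.dim (f ` B)"
    using assms(3) finite_monoms[OF pos]
    by (intro mpoly.dim_sum_of_disjoint_subspaces[where W = "monom ` monoms (w @ [m]) t"]) auto
  moreover have "{a + b | a b. a \<in> A \<and> b \<in> f ` B} = {a + var (length w) * b | a b. a \<in> A \<and> b \<in> B}"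
    by (auto simp: f_def)
  ultimately show ?thesis using \<open>mpoly.dim (f ` B) = mpoly.dim B\<close> by simp
qed

lemma hilb_ext_ideal_recurrence:
  fixes I :: "'k::field mpoly set"
  assumes "\<forall>x\<in>set w. 0 < x" "0 < m" "ideal_in w I"
  defines "J \<equiv> ext_ideal (w @ [m]) I"
  shows "hilb (w @ [m]) J t = hilb w I t + hilb (w @ [m]) J (t - int m)"
proof -
  have I_ring: "I \<subseteq> {p. in_ring (w @ [m]) p}"
    using assms(3) in_ring_mono[of w _ "w @ [m]"] by (auto simp: ideal_in_def)
  then have J: "J = ideal_span (w @ [m]) I"
    unfolding J_def by (rule ext_ideal_eq_ideal_span)
  define V :: "'k mpoly set" where "V = graded_piece (w @ [m]) t"
  define V0 :: "'k mpoly set" where "V0 = graded_piece w t"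
  define V1 :: "'k mpoly set" where "V1 = graded_piece (w @ [m]) (t - int m)"
  have pos: "\<forall>x\<in>set (w @ [m]). 0 < x" using assms(1,2) by auto
  have subspaces: "mpoly.subspace V0" "mpoly.subspace V1"
    "mpoly.subspace (I \<inter> V0)" "mpoly.subspace (J \<inter> V1)"
    using subspace_graded_piece subspace_ideal_in[OF assms(3)]
      subspace_ideal_in[OF ideal_in_ideal_span[OF I_ring]] mpoly.subspace_inter
    by (auto simp: V0_def V1_def J)
  have "mpoly.dim V = mpoly.dim V0 + mpoly.dim V1"
    unfolding V_def V0_def V1_def graded_piece_append_split[of w m t]
    using subspaces by (intro dim_var_mult_split[OF assms(1,2)]) (auto simp: V0_def V1_def)
  moreover have "mpoly.dim (J \<inter> V) = mpoly.dim (I \<inter> V0) + mpoly.dim (J \<inter> V1)"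
    unfolding V_def V0_def V1_def J ideal_span_graded_piece_split[OF assms(3), of m t]
    using subspaces by (intro dim_var_mult_split[OF assms(1,2)]) (auto simp: V0_def V1_def J)
  moreover have "mpoly.dim (I \<inter> V0) \<le> mpoly.dim V0"
    using graded_piece_finite_span[OF assms(1)] finite_monoms[OF assms(1)]
    by (intro mpoly.dim_mono_finite_span[where W = "monom ` monoms w t"]) (auto simp: V0_def)
  moreover have "mpoly.dim (J \<inter> V1) \<le> mpoly.dim V1"
    using graded_piece_finite_span[OF pos] finite_monoms[OF pos]
    by (intro mpoly.dim_mono_finite_span[where W = "monom ` monoms (w @ [m]) (t - int m)"])
      (auto simp: V1_def)
  ultimately show ?thesis
    by (simp add: hilb_def kdim_eq_dim V_def V0_def V1_def)
qed

section \<open>Quasi-polynomials\<close>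

lemma periodic_add_mult:
  fixes f :: "int \<Rightarrow> 'a"
  assumes periodic: "\<And>t. f (t + p) = f t"
  shows "f (t + k * p) = f t"
proof (induction k rule: int_induct[where k = 0])
  case (step1 i)
  have "f (t + (i + 1) * p) = f ((t + i * p) + p)" by (simp add: algebra_simps)
  with step1 show ?case by (simp add: periodic)
next
  case (step2 i)
  have "f (t + i * p) = f ((t + (i - 1) * p) + p)" by (simp add: algebra_simps)
  with step2 show ?case by (simp add: periodic)
qed simp

lemma periodic_mod:
  fixes f :: "int \<Rightarrow> 'a"
  assumes "\<And>t. f (t + p) = f t"
  shows "f (t mod p) = f t"
  using periodic_add_mult[of f p "t mod p" "t div p", OF assms] by simp

lemma periodic_cong:
  fixes f :: "int \<Rightarrow> 'a"
  assumes "\<And>t. f (t + p) = f t" and "t mod p = s mod p"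
  shows "f t = f s"
  using periodic_mod[of f p, OF assms(1)] assms(2) by metis

definition quasi_poly :: "nat \<Rightarrow> nat \<Rightarrow> (nat \<Rightarrow> int \<Rightarrow> 'a::field_char_0) \<Rightarrow> (int \<Rightarrow> 'a) \<Rightarrow> bool" where
  "quasi_poly q D c f \<longleftrightarrow>
     (\<forall>i\<le>D. \<forall>t. c i (t + int q) = c i t) \<and> c D \<noteq> (\<lambda>_. 0) \<and>
     (\<exists>t0. \<forall>t\<ge>t0. f t = (\<Sum>i\<le>D. c i t * of_int t ^ i))"

lemma hilb_qpoly_iff_quasi_poly:
  "hilb_qpoly w I d c \<longleftrightarrow> quasi_poly (Lcm (set w)) d c (\<lambda>t. of_nat (hilb w I t))"
  by (simp add: hilb_qpoly_def quasi_poly_def)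

definition residue_poly :: "(nat \<Rightarrow> int \<Rightarrow> 'a::comm_ring_1) \<Rightarrow> nat \<Rightarrow> int \<Rightarrow> 'a poly" where
  "residue_poly c D r = (\<Sum>i\<le>D. Polynomial.monom (c i r) i)"

lemma coeff_residue_poly: "coeff (residue_poly c D r) i = (if i \<le> D then c i r else 0)"
  by (simp add: residue_poly_def coeff_sum coeff_monom)

lemma degree_residue_poly: "degree (residue_poly c D r) \<le> D"
  by (rule degree_le) (simp add: coeff_residue_poly)

lemma lead_coeff_residue_poly:
  assumes "c D r \<noteq> 0"
  shows "lead_coeff (residue_poly c D r) = c D r"
proof -
  have "degree (residue_poly c D r) = D"
    using assms degree_residue_poly by (intro antisym le_degree) (auto simp: coeff_residue_poly)
  then show ?thesis by (simp add: coeff_residue_poly)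
qed

lemma quasi_poly_eq_residue_poly:
  assumes "quasi_poly q D c f"
  obtains T where
    "\<And>t r. T \<le> t \<Longrightarrow> t mod int q = r mod int q \<Longrightarrow> f t = poly (residue_poly c D r) (of_int t)"
proof -
  obtain T where periodic: "\<And>i t. i \<le> D \<Longrightarrow> c i (t + int q) = c i t"
    and agree: "\<And>t. T \<le> t \<Longrightarrow> f t = (\<Sum>i\<le>D. c i t * of_int t ^ i)"
    using assms by (auto simp: quasi_poly_def)
  have "f t = poly (residue_poly c D r) (of_int t)" if "T \<le> t" "t mod int q = r mod int q" for t r
  proof -
    have "c i t = c i r" if "i \<le> D" for i
      using periodic_cong[of "c i" "int q"] periodic that \<open>t mod int q = r mod int q\<close> by blast
    then show ?thesis
      using agree[OF \<open>T \<le> t\<close>] by (simp add: residue_poly_def poly_sum poly_monom)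
  qed
  with that show ?thesis by blast
qed

lemma poly_eq_if_eq_on_residue_class:
  fixes P P' :: "'a::field_char_0 poly"
  assumes "0 < q"
    and "\<And>t. T \<le> t \<Longrightarrow> t mod int q = r mod int q \<Longrightarrow> poly P (of_int t) = poly P' (of_int t)"
  shows "P = P'"
proof (rule ccontr)
  assume "P \<noteq> P'"
  then have roots: "finite {x. poly (P - P') x = 0}" by (intro poly_roots_finite) simp
  define t where "t k = r + int (nat (T - r) + k) * int q" for k
  have "inj (\<lambda>k. of_int (t k) :: 'a)"
    using assms(1) by (intro injI) (simp add: t_def)
  then have infinite: "infinite (range (\<lambda>k. of_int (t k) :: 'a))" by (rule range_inj_infinite)
  have "T \<le> t k" for k
  proof -
    have "T - r \<le> int (nat (T - r) + k)" by simp
    also have "\<dots> \<le> int (nat (T - r) + k) * int q"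
      using assms(1) by (simp add: mult_le_cancel_left1)
    finally show ?thesis unfolding t_def by linarith
  qed
  moreover have "t k mod int q = r mod int q" for k by (simp add: t_def)
  ultimately have "range (\<lambda>k. of_int (t k) :: 'a) \<subseteq> {x. poly (P - P') x = 0}"
    using assms(2) by auto
  with infinite roots show False using finite_subset by blast
qed

lemma quasi_poly_unique:
  assumes "0 < q" "quasi_poly q D c f" "quasi_poly q D' c' f"
  shows "D' = D \<and> c' D' = c D"
proof -
  obtain T where T: "\<And>t r. T \<le> t \<Longrightarrow> t mod int q = r mod int q \<Longrightarrow> f t = poly (residue_poly c D r) (of_int t)"
    using quasi_poly_eq_residue_poly[OF assms(2)] by blast
  obtain T' where T': "\<And>t r. T' \<le> t \<Longrightarrow> t mod int q = r mod int q \<Longrightarrow> f t = poly (residue_poly c' D' r) (of_int t)"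
    using quasi_poly_eq_residue_poly[OF assms(3)] by blast
  have same: "residue_poly c D r = residue_poly c' D' r" for r
    by (rule poly_eq_if_eq_on_residue_class[OF assms(1), of "max T T'" r]) (metis T T' max.bounded_iff)
  obtain x where "c D x \<noteq> 0" using assms(2) by (auto simp: quasi_poly_def fun_eq_iff)
  obtain x' where "c' D' x' \<noteq> 0" using assms(3) by (auto simp: quasi_poly_def fun_eq_iff)
  have "D \<le> D'"
    using same[of x] coeff_residue_poly[of c D x D] coeff_residue_poly[of c' D' x D] \<open>c D x \<noteq> 0\<close>
    by (auto split: if_splits)
  moreover have "D' \<le> D"
    using same[of x'] coeff_residue_poly[of c D x' D'] coeff_residue_poly[of c' D' x' D'] \<open>c' D' x' \<noteq> 0\<close>
    by (auto split: if_splits)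
  ultimately have "D' = D" by simp
  moreover have "c' D' r = c D r" for r
    using same[of r] coeff_residue_poly[of c D r D] coeff_residue_poly[of c' D' r D'] \<open>D' = D\<close> by simp
  ultimately show ?thesis by auto
qed

lemma poly_eq_sum_coeff:
  fixes p :: "'a::comm_semiring_1 poly"
  assumes "degree p \<le> n"
  shows "poly p x = (\<Sum>i\<le>n. coeff p i * x ^ i)"
  unfolding poly_altdef using assms by (intro sum.mono_neutral_left) (auto simp: coeff_eq_0)

lemma quasi_poly_if_poly_on_residue_classes:
  assumes "0 < q"
    and P: "\<And>r. degree (P r) \<le> D" "\<And>r. coeff (P r) D = lc r"
    and T: "\<And>r t. T r \<le> t \<Longrightarrow> t mod int q = r mod int q \<Longrightarrow> f t = poly (P r) (of_int t)"
    and lc_mod: "\<And>r. lc (r mod int q) = lc r" and "lc r0 \<noteq> 0"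
  shows "\<exists>c. quasi_poly q D c f \<and> c D = lc"
proof -
  define c where "c i t = coeff (P (t mod int q)) i" for i t
  have "c D = lc" by (simp add: c_def P lc_mod fun_eq_iff)
  have agree: "f t = (\<Sum>i\<le>D. c i t * of_int t ^ i)" if "Max (T ` {0..<int q}) \<le> t" for t
  proof -
    have "T (t mod int q) \<le> Max (T ` {0..<int q})"
      using assms(1) by (intro Max_ge) auto
    then have "f t = poly (P (t mod int q)) (of_int t)"
      using that by (intro T) auto
    then show ?thesis
      unfolding c_def by (simp add: poly_eq_sum_coeff[OF P(1)])
  qed
  have "quasi_poly q D c f"
    unfolding quasi_poly_def
  proof (intro conjI)
    show "\<forall>i\<le>D. \<forall>t. c i (t + int q) = c i t" by (simp add: c_def)
    show "c D \<noteq> (\<lambda>_. 0)" using \<open>c D = lc\<close> \<open>lc r0 \<noteq> 0\<close> by auto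
    show "\<exists>t0. \<forall>t\<ge>t0. f t = (\<Sum>i\<le>D. c i t * of_int t ^ i)" using agree by blast
  qed
  with \<open>c D = lc\<close> show ?thesis by blast
qed

lemma poly_map_poly_of_rat: "poly (map_poly of_rat p) (of_rat x) = (of_rat (poly p x) :: 'a::field_char_0)"
  by (induction p) (simp_all add: map_poly_pCons of_rat_add of_rat_mult)

(* Via the reals, where the library bounds a polynomial below by its leading coefficient at infinity. *)
lemma lead_coeff_nonneg_if_frequently_nonneg:
  fixes p :: "rat poly"
  assumes "\<And>x. \<exists>y\<ge>x. 0 \<le> poly p y"
  shows "0 \<le> lead_coeff p"
proof (rule ccontr)
  assume "\<not> 0 \<le> lead_coeff p"
  define p' where "p' = - map_poly (of_rat :: rat \<Rightarrow> real) p"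
  have "lead_coeff p \<noteq> 0" using \<open>\<not> 0 \<le> lead_coeff p\<close> by auto
  then have "lead_coeff p' = - of_rat (lead_coeff p)"
    by (simp add: p'_def lead_coeff_map_poly_nz)
  then have "0 < lead_coeff p'" using \<open>\<not> 0 \<le> lead_coeff p\<close> by simp
  then obtain n where n: "\<And>x. n \<le> x \<Longrightarrow> lead_coeff p' \<le> poly p' x"
    using poly_pinfty_gt_lc by blast
  obtain y where "of_int \<lceil>n\<rceil> \<le> y" "0 \<le> poly p y" using assms by blast
  then have "n \<le> of_rat y"
    by (metis ceiling_le_iff le_of_int_ceiling of_rat_less_eq of_rat_of_int_eq order.trans)
  then have "0 < poly p' (of_rat y)" using n \<open>0 < lead_coeff p'\<close> by fastforce
  then show False using \<open>0 \<le> poly p y\<close> by (simp add: p'_def poly_map_poly_of_rat)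
qed

lemma exists_poly_partial_sums:
  fixes g :: "'a::field_char_0 poly"
  assumes "degree g \<le> d"
  shows "\<exists>R. degree R \<le> Suc d \<and> coeff R (Suc d) = coeff g d / of_nat (Suc d) \<and>
    (\<forall>N. poly R (of_nat N) = (\<Sum>j\<le>N. poly g (of_nat j)))"
  using assms
proof (induction d arbitrary: g)
  case 0
  then obtain a where "g = [:a:]" by (auto elim: degree_eq_zeroE)
  then show ?case
    by (intro exI[of _ "[:a, a:]"]) (simp add: algebra_simps)
next
  case (Suc d)
  \<comment> \<open>T = (X + 1)^n - X^n has telescoping partial sums and coefficient n in degree n - 1,
    so subtracting a multiple of T lowers the degree of g.\<close>
  define n where "n = Suc (Suc d)"
  define a where "a = coeff g (Suc d) / of_nat n"
  define T :: "'a poly" where "T = [:1, 1:] ^ n - Polynomial.monom 1 n"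
  have coeff_T: "coeff T k = (if k < n then of_nat (n choose k) else 0)" for k
    by (cases k n rule: linorder_cases)
       (simp_all add: T_def coeff_linear_poly_power coeff_monom coeff_eq_0 degree_linear_power)
  have poly_T: "poly T x = (x + 1) ^ n - x ^ n" for x
    by (simp add: T_def poly_monom add.commute)
  have "degree (g - smult a T) \<le> d"
  proof (rule degree_le, intro allI impI)
    fix k assume "d < k"
    show "coeff (g - smult a T) k = 0"
    proof (cases "k = Suc d")
      case True
      have "coeff T (Suc d) = of_nat n" by (simp add: coeff_T n_def)
      moreover have "of_nat n \<noteq> (0 :: 'a)" unfolding n_def by (rule of_nat_neq_0)
      ultimately show ?thesis by (simp add: True a_def)
    next
      case False
      then show ?thesis
        using \<open>d < k\<close> Suc.prems by (simp add: coeff_T coeff_eq_0 n_def)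
    qed
  qed
  then obtain R where R: "degree R \<le> Suc d"
    "\<And>N. poly R (of_nat N) = (\<Sum>j\<le>N. poly (g - smult a T) (of_nat j))"
    using Suc.IH by blast
  define R' where "R' = R + smult a ([:1, 1:] ^ n)"
  have "degree R' \<le> n"
    unfolding R'_def
  proof (rule degree_add_le)
    show "degree R \<le> n" using R(1) by (simp add: n_def)
    show "degree (smult a ([:1, 1:] ^ n)) \<le> n"
      by (metis degree_smult_le degree_linear_power)
  qed
  moreover have "coeff R' n = coeff g (Suc d) / of_nat n"
  proof -
    have "coeff R n = 0" using R(1) by (simp add: coeff_eq_0 n_def)
    then show ?thesis by (simp add: R'_def a_def coeff_linear_power)
  qed
  moreover have "poly R' (of_nat N) = (\<Sum>j\<le>N. poly g (of_nat j))" for N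
  proof -
    have "(\<Sum>j\<le>N. poly T (of_nat j)) = (of_nat N + 1) ^ n"
      using sum_lessThan_telescope[of "\<lambda>j. (of_nat j :: 'a) ^ n" "Suc N"]
      by (simp add: poly_T lessThan_Suc_atMost n_def add.commute)
    then show ?thesis
      by (simp add: R'_def R(2) sum.distrib sum_subtractf sum_distrib_left[symmetric] add.commute)
  qed
  ultimately show ?case by (auto simp: n_def)
qed

lemma eventually_poly_if_poly_differences:
  fixes F :: "nat \<Rightarrow> 'a::field_char_0"
  assumes "degree g \<le> d"
    and step: "\<And>N. N0 \<le> N \<Longrightarrow> F (Suc N) = F N + poly g (of_nat (Suc N))"
  shows "\<exists>R. degree R \<le> Suc d \<and> coeff R (Suc d) = coeff g d / of_nat (Suc d) \<and>
    (\<forall>N\<ge>N0. F N = poly R (of_nat N))"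
proof -
  obtain S where S: "degree S \<le> Suc d" "coeff S (Suc d) = coeff g d / of_nat (Suc d)"
    "\<And>N. poly S (of_nat N) = (\<Sum>j\<le>N. poly g (of_nat j))"
    using exists_poly_partial_sums[OF assms(1)] by blast
  define K where "K = F N0 - poly S (of_nat N0)"
  define R where "R = S + [:K:]"
  have "F N = poly R (of_nat N)" if "N0 \<le> N" for N
    using that
  proof (induction N rule: nat_induct_at_least)
    case (Suc N)
    have S_step: "poly S (of_nat (Suc N)) = poly S (of_nat N) + poly g (of_nat (Suc N))"
      by (simp only: S(3) sum.atMost_Suc)
    have "F (Suc N) = poly R (of_nat N) + poly g (of_nat (Suc N))"
      using step[OF Suc.hyps] Suc.IH by simp
    also have "\<dots> = poly R (of_nat (Suc N))"
      unfolding R_def poly_add S_step by simp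
    finally show ?case .
  qed (simp add: R_def K_def)
  moreover have "degree R \<le> Suc d" using S(1) by (simp add: R_def degree_add_le)
  ultimately show ?thesis using S(2) by (auto simp: R_def)
qed

lemma coeff_pcompose_linear_top:
  fixes p :: "'a::idom poly"
  assumes "degree p \<le> n" and "b \<noteq> 0"
  shows "coeff (pcompose p [:a, b:]) n = coeff p n * b ^ n"
proof (cases "degree p = n")
  case True
  then have "degree (pcompose p [:a, b:]) = n" using assms(2) by (simp add: degree_pcompose)
  then have "coeff (pcompose p [:a, b:]) n = lead_coeff (pcompose p [:a, b:])" by simp
  also have "\<dots> = lead_coeff p * b ^ degree p" using assms(2) by (simp add: lead_coeff_comp)
  finally show ?thesis using True by simp
next
  case False
  then have "degree (pcompose p [:a, b:]) < n"
    using assms degree_pcompose_le[of p "[:a, b:]"] by simp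
  then show ?thesis using False assms(1) by (simp add: coeff_eq_0)
qed

lemma poly_on_residue_class_if_poly_on_progression:
  fixes f :: "int \<Rightarrow> 'a::field_char_0"
  assumes "0 < q" "degree R \<le> D"
    and R: "\<And>N. N0 \<le> N \<Longrightarrow> f (r + int N * int q) = poly R (of_nat N)"
  shows "\<exists>P T. degree P \<le> D \<and> coeff P D = coeff R D / of_nat q ^ D \<and>
    (\<forall>t\<ge>T. t mod int q = r mod int q \<longrightarrow> f t = poly P (of_int t))"
proof -
  have q: "(of_nat q :: 'a) \<noteq> 0" using assms(1) by simp
  define P where "P = pcompose R [:- of_int r / of_nat q, 1 / of_nat q:]"
  have "degree P \<le> D"
    using degree_pcompose_le[of R "[:- of_int r / of_nat q, 1 / of_nat q:]"] assms(2) q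
    by (simp add: P_def)
  moreover have "coeff P D = coeff R D / of_nat q ^ D"
    unfolding P_def using assms(2) q by (simp add: coeff_pcompose_linear_top power_one_over)
  moreover have "f t = poly P (of_int t)"
    if "r + int N0 * int q \<le> t" "t mod int q = r mod int q" for t
  proof -
    have "int q dvd t - r" using that(2) by (simp add: mod_eq_dvd_iff)
    then obtain k where "t - r = int q * k" by (rule dvdE)
    then have k: "t = r + k * int q" by (simp add: algebra_simps)
    with that(1) assms(1) have "int N0 \<le> k" by simp
    then have "f t = poly R (of_nat (nat k))" using R[of "nat k"] k by simp
    also have "of_nat (nat k) = (of_int t - of_int r) / (of_nat q :: 'a)"
      using k q \<open>int N0 \<le> k\<close> by (simp add: field_simps)
    finally show ?thesis by (simp add: P_def poly_pcompose diff_divide_distrib)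
  qed
  ultimately show ?thesis by blast
qed

lemma sum_periodic_over_neg_multiples:
  fixes f :: "int \<Rightarrow> 'a::comm_monoid_add"
  assumes "0 < q" "0 < m" and periodic: "\<And>t. f (t + int q) = f t"
  shows "(\<Sum>a<lcm q m div m. f (- (int a * int m))) = (\<Sum>j\<in>{j. j < q \<and> gcd m q dvd j}. f (int j))"
proof -
  define g where "g = gcd m q"
  define q1 where "q1 = q div g"
  define m1 where "m1 = m div g"
  have g: "0 < g" "q = g * q1" "m = g * m1"
    using assms(1) by (simp_all add: g_def q1_def m1_def)
  have "coprime m1 q1"
    using assms(1) by (simp add: g_def q1_def m1_def div_gcd_coprime)
  have "gcd q m = g" by (simp add: g_def gcd.commute)
  then have "g * lcm q m = q * m" using prod_gcd_lcm_nat[of q m] by simp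
  also have "\<dots> = g * (q1 * m)" using g(2) by simp
  finally have "lcm q m div m = q1" using g(1) assms(2) by simp
  define \<phi> where "\<phi> a = nat ((- (int a * int m)) mod int q)" for a
  have int_\<phi>: "int (\<phi> a) = (- (int a * int m)) mod int q" for a
    using assms(1) by (simp add: \<phi>_def)
  have "inj_on \<phi> {..<q1}"
  proof (rule inj_onI)
    fix a b assume "a \<in> {..<q1}" "b \<in> {..<q1}" "\<phi> a = \<phi> b"
    then have "int q dvd (- (int a * int m)) - (- (int b * int m))"
      using int_\<phi> by (metis mod_eq_dvd_iff)
    then have "int q dvd (int b - int a) * int m" by (simp add: algebra_simps)
    then have "int g * int q1 dvd int g * ((int b - int a) * int m1)"
      using g by (simp add: algebra_simps)
    then have "int q1 dvd (int b - int a) * int m1" using g(1) by simp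
    then have "int q1 dvd int b - int a"
      using \<open>coprime m1 q1\<close> by (simp add: coprime_dvd_mult_left_iff coprime_commute)
    moreover have "\<bar>int b - int a\<bar> < int q1" using \<open>a \<in> {..<q1}\<close> \<open>b \<in> {..<q1}\<close> by auto
    ultimately have "int b - int a = 0"
      using dvd_imp_le_int[of "int b - int a" "int q1"] by (cases "int b - int a = 0") auto
    then show "a = b" by simp
  qed
  define S where "S = {j. j < q \<and> g dvd j}"
  have S: "S = (\<lambda>k. g * k) ` {..<q1}"
    using g(1) unfolding S_def g(2) by (auto elim!: dvdE)
  have "\<phi> ` {..<q1} \<subseteq> S"
  proof
    fix j assume "j \<in> \<phi> ` {..<q1}"
    then obtain a where a: "j = \<phi> a" by blast
    have "int g dvd (- (int a * int m)) mod int q"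
      using g by (simp add: dvd_mod)
    then have "int g dvd int (\<phi> a)" by (simp add: int_\<phi>)
    moreover have "int (\<phi> a) < int q" using assms(1) by (simp add: int_\<phi>)
    ultimately show "j \<in> S" using a by (simp add: S_def)
  qed
  moreover have "card (\<phi> ` {..<q1}) = card S"
    using \<open>inj_on \<phi> {..<q1}\<close> g(1) by (simp add: S card_image inj_on_def)
  ultimately have "\<phi> ` {..<q1} = S"
    by (intro card_subset_eq) (simp_all add: S)
  have "f (- (int a * int m)) = f (int (\<phi> a))" for a
    using periodic_mod[of f "int q", OF periodic] int_\<phi>[of a] by simp
  then have "(\<Sum>a<q1. f (- (int a * int m))) = (\<Sum>a<q1. f (int (\<phi> a)))" by simp
  also have "\<dots> = (\<Sum>j\<in>S. f (int j))"
    using sum.reindex[OF \<open>inj_on \<phi> {..<q1}\<close>, of "\<lambda>j. f (int j)"] \<open>\<phi> ` {..<q1} = S\<close> by simp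
  finally show ?thesis using \<open>lcm q m div m = q1\<close> by (simp add: S_def g_def)
qed

section \<open>Quasi-polynomial solutions of the cone recurrence\<close>

locale cone_recurrence =
  fixes H H' :: "int \<Rightarrow> rat" and q m d :: nat and c :: "nat \<Rightarrow> int \<Rightarrow> rat"
  assumes q_pos: "0 < q" and m_pos: "0 < m"
    and H_quasi_poly: "quasi_poly q d c H"
    and H_nonneg: "\<And>t. 0 \<le> H t"
    and recurrence: "\<And>t. H' t = H t + H' (t - int m)"
begin

definition q' :: nat where "q' = lcm q m"

lemma q'_pos: "0 < q'"
  using q_pos m_pos by (simp add: q'_def lcm_pos_nat)

lemma q'_div_m: "int (q' div m) * int m = int q'"
  by (simp add: q'_def flip: of_nat_mult)

lemma q_dvd_q': "q dvd q'"
  by (simp add: q'_def)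

lemma c_periodic:
  assumes "i \<le> d"
  shows "c i (t + k * int q') = c i t"
proof -
  obtain e where e: "q' = q * e" using q_dvd_q' by (rule dvdE)
  have "\<And>t. c i (t + int q) = c i t" using H_quasi_poly assms by (simp add: quasi_poly_def)
  then have "c i (t + (k * int e) * int q) = c i t" by (rule periodic_add_mult)
  then show ?thesis by (simp add: e algebra_simps)
qed

lemma H'_unfold: "H' t = (\<Sum>a<k. H (t - int a * int m)) + H' (t - int k * int m)"
proof (induction k)
  case (Suc k)
  have "H' (t - int k * int m) = H (t - int k * int m) + H' (t - int (Suc k) * int m)"
    using recurrence[of "t - int k * int m"] by (simp add: algebra_simps)
  with Suc show ?case by simp
qed simp

lemma H'_period_step: "H' t = (\<Sum>a<q' div m. H (t - int a * int m)) + H' (t - int q')"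
  using H'_unfold[of t "q' div m"] q'_div_m by simp

definition top_coeff :: "int \<Rightarrow> rat" where
  "top_coeff r = (\<Sum>a<q' div m. c d (r - int a * int m)) / (of_nat q' * of_nat (Suc d))"

lemma top_coeff_mod: "top_coeff (r mod int q') = top_coeff r"
proof -
  have "c d (r mod int q' - int a * int m) = c d (r - int a * int m)" for a
    using c_periodic[of d "r - int a * int m" "- (r div int q')"]
    by (simp add: algebra_simps minus_div_mult_eq_mod[symmetric])
  then show ?thesis by (simp add: top_coeff_def)
qed

lemma c_top_nonneg: "0 \<le> c d t"
proof (cases "c d t = 0")
  case False
  obtain T where T: "\<And>s r. T \<le> s \<Longrightarrow> s mod int q = r mod int q \<Longrightarrow> H s = poly (residue_poly c d r) (of_int s)"
    using quasi_poly_eq_residue_poly[OF H_quasi_poly] by blast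
  have "0 \<le> lead_coeff (residue_poly c d t)"
  proof (rule lead_coeff_nonneg_if_frequently_nonneg)
    fix x :: rat
    define k where "k = nat (max T \<lceil>x\<rceil> - t)"
    define s where "s = t + int k * int q"
    have "max T \<lceil>x\<rceil> - t \<le> int k" by (auto simp: k_def)
    also have "\<dots> \<le> int k * int q" using q_pos by (simp add: mult_le_cancel_left1)
    finally have "T \<le> s" "\<lceil>x\<rceil> \<le> s" unfolding s_def by linarith+
    moreover have "s mod int q = t mod int q" by (simp add: s_def)
    ultimately have "0 \<le> poly (residue_poly c d t) (of_int s)" "x \<le> of_int s"
      using T[of s t] H_nonneg[of s] by (auto simp: ceiling_le_iff)
    then show "\<exists>y\<ge>x. 0 \<le> poly (residue_poly c d t) y" by blast
  qed
  then show ?thesis using lead_coeff_residue_poly[of c d t] False by simp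
qed simp

lemma top_coeff_nonzero: "\<exists>r. top_coeff r \<noteq> 0"
proof -
  obtain x where "c d x \<noteq> 0" using H_quasi_poly by (auto simp: quasi_poly_def fun_eq_iff)
  then have "0 < c d (x - int 0 * int m)" using c_top_nonneg[of x] by simp
  also have "\<dots> \<le> (\<Sum>a<q' div m. c d (x - int a * int m))"
    using q'_div_m q'_pos by (intro member_le_sum c_top_nonneg) (auto intro: Nat.gr0I)
  finally show ?thesis using q'_pos by (intro exI[of _ x]) (simp add: top_coeff_def)
qed

definition step_poly :: "int \<Rightarrow> rat poly" where
  "step_poly r = (\<Sum>a<q' div m.
     pcompose (residue_poly c d (r - int a * int m)) [:of_int (r - int a * int m), of_nat q':])"

lemma degree_step_poly: "degree (step_poly r) \<le> d"
  unfolding step_poly_def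
proof (rule degree_sum_le)
  fix a
  let ?s = "r - int a * int m"
  show "degree (pcompose (residue_poly c d ?s) [:of_int ?s, of_nat q':]) \<le> d"
    using degree_pcompose_le[of "residue_poly c d ?s" "[:of_int ?s, of_nat q':]"]
      degree_residue_poly[of c d ?s] q'_pos by simp
qed simp

lemma coeff_step_poly: "coeff (step_poly r) d = of_nat q' ^ d * (\<Sum>a<q' div m. c d (r - int a * int m))"
  using q'_pos by (simp add: step_poly_def coeff_sum coeff_pcompose_linear_top degree_residue_poly
      coeff_residue_poly sum_distrib_left mult.commute)

lemma H'_step:
  obtains N0 where "\<And>N. N0 \<le> N \<Longrightarrow>
    H' (r + int (Suc N) * int q') = H' (r + int N * int q') + poly (step_poly r) (of_nat (Suc N))"
proof -
  obtain T where T: "\<And>t r. T \<le> t \<Longrightarrow> t mod int q = r mod int q \<Longrightarrow> H t = poly (residue_poly c d r) (of_int t)"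
    using quasi_poly_eq_residue_poly[OF H_quasi_poly] by blast
  obtain e where e: "q' = q * e" using q_dvd_q' by (rule dvdE)
  have "H' (r + int (Suc N) * int q') = H' (r + int N * int q') + poly (step_poly r) (of_nat (Suc N))"
    if "nat (T - r) \<le> N" for N
  proof -
    let ?t = "r + int (Suc N) * int q'"
    have "H (?t - int a * int m) =
        poly (pcompose (residue_poly c d (r - int a * int m)) [:of_int (r - int a * int m), of_nat q':])
          (of_nat (Suc N))"
      if "a < q' div m" for a
    proof -
      have "int a * int m < int q'"
        using that q'_div_m m_pos by (metis mult_less_cancel2 of_nat_less_iff of_nat_mult)
      moreover have "int N \<le> int N * int q'" using q'_pos by (simp add: mult_le_cancel_left1)
      ultimately have "T \<le> ?t - int a * int m"
        using \<open>nat (T - r) \<le> N\<close> by (simp add: algebra_simps)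
      moreover have "(?t - int a * int m) mod int q = (r - int a * int m) mod int q"
      proof -
        have "?t - int a * int m = (r - int a * int m) + (int (Suc N) * int e) * int q"
          by (simp add: e algebra_simps)
        then show ?thesis by (metis mod_mult_self1)
      qed
      ultimately have "H (?t - int a * int m) =
          poly (residue_poly c d (r - int a * int m)) (of_int (?t - int a * int m))"
        by (rule T)
      then show ?thesis by (simp add: poly_pcompose algebra_simps)
    qed
    then have "(\<Sum>a<q' div m. H (?t - int a * int m)) = poly (step_poly r) (of_nat (Suc N))"
      by (simp add: step_poly_def poly_sum)
    moreover have "H' ?t = (\<Sum>a<q' div m. H (?t - int a * int m)) + H' (r + int N * int q')"
      using H'_period_step[of ?t] by (simp add: algebra_simps)
    ultimately show ?thesis by simp
  qed
  then show ?thesis using that by blast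
qed

lemma H'_poly_on_residue_class:
  "\<exists>P T. degree P \<le> Suc d \<and> coeff P (Suc d) = top_coeff r \<and>
     (\<forall>t\<ge>T. t mod int q' = r mod int q' \<longrightarrow> H' t = poly P (of_int t))"
proof -
  obtain N0 where "\<And>N. N0 \<le> N \<Longrightarrow>
      H' (r + int (Suc N) * int q') = H' (r + int N * int q') + poly (step_poly r) (of_nat (Suc N))"
    using H'_step by blast
  then obtain R where R: "degree R \<le> Suc d" "coeff R (Suc d) = coeff (step_poly r) d / of_nat (Suc d)"
    "\<And>N. N0 \<le> N \<Longrightarrow> H' (r + int N * int q') = poly R (of_nat N)"
    using eventually_poly_if_poly_differences[OF degree_step_poly, of N0 "\<lambda>N. H' (r + int N * int q')"]
    by blast
  have "of_nat q' ^ d * X / of_nat (Suc d) / of_nat q' ^ Suc d = X / (of_nat q' * of_nat (Suc d))"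
    for X :: rat
    using q'_pos by (simp add: field_simps del: of_nat_Suc)
  then have "coeff R (Suc d) / of_nat q' ^ Suc d = top_coeff r"
    using R(2) by (simp add: coeff_step_poly top_coeff_def del: of_nat_Suc)
  then show ?thesis
    using poly_on_residue_class_if_poly_on_progression[OF q'_pos R(1) R(3)] by metis
qed

theorem quasi_poly_H': "\<exists>c'. quasi_poly q' (Suc d) c' H' \<and> c' (Suc d) = top_coeff"
proof -
  obtain P T where "\<And>r. degree (P r) \<le> Suc d" "\<And>r. coeff (P r) (Suc d) = top_coeff r"
    "\<And>r t. T r \<le> t \<Longrightarrow> t mod int q' = r mod int q' \<Longrightarrow> H' t = poly (P r) (of_int t)"
    using H'_poly_on_residue_class by metis
  moreover obtain r0 where "top_coeff r0 \<noteq> 0" using top_coeff_nonzero by blast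
  ultimately show ?thesis
    using quasi_poly_if_poly_on_residue_classes[OF q'_pos] top_coeff_mod by blast
qed

corollary quasi_poly_H'_top:
  assumes "quasi_poly q' d' c' H'"
  shows "d' = Suc d" and "c' d' = top_coeff"
proof -
  obtain c0 where "quasi_poly q' (Suc d) c0 H'" "c0 (Suc d) = top_coeff" using quasi_poly_H' by blast
  with quasi_poly_unique[OF q'_pos \<open>quasi_poly q' (Suc d) c0 H'\<close> assms]
  show "d' = Suc d" "c' d' = top_coeff" by auto
qed

lemma fact_Suc_mult_top_coeff_0:
  "fact (Suc d) * top_coeff 0 = fact d / of_nat q' * (\<Sum>j | j < q \<and> gcd m q dvd j. c d (int j))"
proof -
  have "fact (Suc d) * top_coeff 0 = fact d / of_nat q' * (\<Sum>a<q' div m. c d (- (int a * int m)))"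
    using q'_pos by (simp add: top_coeff_def field_simps del: of_nat_Suc)
  also have "(\<Sum>a<q' div m. c d (- (int a * int m))) = (\<Sum>j | j < q \<and> gcd m q dvd j. c d (int j))"
    unfolding q'_def using H_quasi_poly q_pos m_pos
    by (intro sum_periodic_over_neg_multiples) (auto simp: quasi_poly_def)
  finally show ?thesis .
qed

end

theorem lemma2p12:
  fixes w :: "nat list" and m d :: nat and I :: "'k::alg_closed_field mpoly set"
    and c :: "nat \<Rightarrow> int \<Rightarrow> rat"
  assumes "w \<noteq> []" and "\<forall>x\<in>set w. 0 < x"
    and "homog_ideal w I" and "saturated w I"
    and "hilb_qpoly w I d c"
    and "0 < m"
  shows "(\<exists>d' c'. hilb_qpoly (w @ [m]) (ext_ideal (w @ [m]) I) d' c') \<and>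
    (\<forall>d' c'. hilb_qpoly (w @ [m]) (ext_ideal (w @ [m]) I) d' c' \<longrightarrow>
       fact d' * c' d' 0 =
       fact d / rat_of_nat (Lcm (set (w @ [m])))
         * (\<Sum>j\<in>{j. j < Lcm (set w) \<and> gcd m (Lcm (set w)) dvd j}. c d (int j)))"
proof -
  define q where "q = Lcm (set w)"
  define J where "J = ext_ideal (w @ [m]) I"
  define H where "H = (\<lambda>t. rat_of_nat (hilb w I t))"
  define H' where "H' = (\<lambda>t. rat_of_nat (hilb (w @ [m]) J t))"
  have "ideal_in w I" using assms(3) by (simp add: homog_ideal_def)
  interpret cone_recurrence H H' q m d c
  proof
    show "0 < q" using assms(2) by (auto simp: q_def intro!: Nat.gr0I)
    show "quasi_poly q d c H" using assms(5) by (simp add: hilb_qpoly_iff_quasi_poly H_def q_def)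
    show "H' t = H t + H' (t - int m)" for t
      using hilb_ext_ideal_recurrence[OF assms(2,6) \<open>ideal_in w I\<close>, of t]
      by (simp add: H_def H'_def J_def)
  qed (simp_all add: assms(6) H_def)
  have Lcm_append: "Lcm (set (w @ [m])) = q'"
    unfolding q'_def by (simp add: q_def lcm.commute)
  have hilb_qpoly_J: "hilb_qpoly (w @ [m]) J d' c' \<longleftrightarrow> quasi_poly q' d' c' H'" for d' c'
    by (simp only: hilb_qpoly_iff_quasi_poly H'_def Lcm_append)
  have "fact d' * c' d' 0 = fact d / of_nat q' * (\<Sum>j | j < q \<and> gcd m q dvd j. c d (int j))"
    if "quasi_poly q' d' c' H'" for d' c'
    using quasi_poly_H'_top[OF that] fact_Suc_mult_top_coeff_0 by simp
  then show ?thesis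
    unfolding J_def[symmetric] q_def[symmetric] Lcm_append hilb_qpoly_J
    using quasi_poly_H' by blast
qed

end
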